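(* Let $k$ be an integer and let $G$ be a finite graph (parallel edges allowed, no loops) with $\Delta(G)\le k$. Then $\Gamma(G)\le k$ if and only if $2|E(G[U])|\le k(|U|-1)$ for every set $U\subseteq V(G)$ such that $|U|$ is odd, $|U|\ge 3$, and the underlying simple graph of $G[U]$ has no vertices of degree at most one.
   Context: $\Delta(G)$ is the maximum degree of $G$ (counting parallel edges with multiplicity). $G[U]$ is the subgraph induced by $U$, and $|E(G[U])|$ counts edges with multiplicity. $\Gamma(G)=\max\{2|E(G[U])|/(|U|-1): U\subseteq V(G),\ |U|\ge 3,\ |U| \text{ odd}\}$. The underlying simple graph of a graph is obtained by replacing each class of parallel edges by a single edge. *)

theory Defs
  imports "HOL-Analysis.Analysis"
begin

text \<open>A finite multigraph without loops on vertex set V, given by an edge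
  multiplicity function m (m u w = number of parallel edges between u and w).\<close>
definition multigraph :: "'a set \<Rightarrow> ('a \<Rightarrow> 'a \<Rightarrow> nat) \<Rightarrow> bool" where
  "multigraph V m \<longleftrightarrow> finite V \<and> (\<forall>u w. m u w = m w u) \<and> (\<forall>v. m v v = 0)
     \<and> (\<forall>u w. m u w \<noteq> 0 \<longrightarrow> u \<in> V \<and> w \<in> V)"

definition mdegree :: "'a set \<Rightarrow> ('a \<Rightarrow> 'a \<Rightarrow> nat) \<Rightarrow> 'a \<Rightarrow> nat" where
  "mdegree V m v = (\<Sum>u\<in>V. m v u)"

definition max_degree :: "'a set \<Rightarrow> ('a \<Rightarrow> 'a \<Rightarrow> nat) \<Rightarrow> nat" where
  "max_degree V m = Max (insert 0 (mdegree V m ` V))"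

text \<open>|E(G[U])|, counting parallel edges with multiplicity: each edge between distinct
  u,w in U is counted once for the ordered pair (u,w) and once for (w,u).\<close>
definition induced_edges :: "('a \<Rightarrow> 'a \<Rightarrow> nat) \<Rightarrow> 'a set \<Rightarrow> nat" where
  "induced_edges m U = (\<Sum>u\<in>U. \<Sum>w\<in>U. m u w) div 2"

text \<open>\<Gamma>(G) as a supremum in the extended reals (= the maximum when some admissible U
  exists; -\<infinity> by convention otherwise).\<close>
definition Gamma :: "'a set \<Rightarrow> ('a \<Rightarrow> 'a \<Rightarrow> nat) \<Rightarrow> ereal" where
  "Gamma V m = (SUP U\<in>{U. U \<subseteq> V \<and> card U \<ge> 3 \<and> odd (card U)}.
       ereal (2 * real (induced_edges m U) / (real (card U) - 1)))"

definition simple_induced_degree :: "('a \<Rightarrow> 'a \<Rightarrow> nat) \<Rightarrow> 'a set \<Rightarrow> 'a \<Rightarrow> nat" where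
  "simple_induced_degree m U v = card {u\<in>U. m v u \<noteq> 0}"

end

theory Submission
  imports Defs
begin

text \<open>Only the direction from the condition to \<open>\<Gamma>(G) \<le> k\<close> needs an argument, by induction on
  \<open>|U|\<close> over odd sets. If the underlying simple graph of \<open>G[U]\<close> has a vertex \<open>v\<close> of degree at
  most one, let \<open>u \<noteq> v\<close> be its only possible neighbour in \<open>U\<close> and remove both: the removed
  edges all meet \<open>u\<close>, so there are at most \<open>\<Delta>(G) \<le> k\<close> of them, while \<open>k(|U| - 1)\<close> drops by
  \<open>2k\<close>. Otherwise \<open>U\<close> is one of the sets covered by the hypothesis, or \<open>|U| = 1\<close>.\<close>

lemma
  assumes "multigraph V m"
  shows multigraph_finite: "finite V"
    and multigraph_sym: "m u w = m w u"
    and multigraph_loopless: "m v v = 0"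
  using assms unfolding multigraph_def by blast+

lemma double_sum_insert_symmetric:
  fixes m :: "'a \<Rightarrow> 'a \<Rightarrow> 'b :: comm_semiring_1"
  assumes "finite A" "a \<notin> A" "\<And>u w. m u w = m w u" "m a a = 0"
  shows "(\<Sum>u\<in>insert a A. \<Sum>w\<in>insert a A. m u w)
           = (\<Sum>u\<in>A. \<Sum>w\<in>A. m u w) + 2 * (\<Sum>w\<in>A. m a w)"
proof -
  have "(\<Sum>u\<in>insert a A. \<Sum>w\<in>insert a A. m u w)
          = (\<Sum>w\<in>A. m a w) + (\<Sum>u\<in>A. m u a) + (\<Sum>u\<in>A. \<Sum>w\<in>A. m u w)"
    using assms by (simp add: sum.distrib add.assoc)
  also have "(\<Sum>u\<in>A. m u a) = (\<Sum>w\<in>A. m a w)"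
    using assms(3) by metis
  finally show ?thesis
    by (simp add: mult_2 add_ac)
qed

lemma induced_edges_insert:
  assumes "multigraph V m" "finite A" "a \<notin> A"
  shows "induced_edges m (insert a A) = induced_edges m A + (\<Sum>w\<in>A. m a w)"
  using double_sum_insert_symmetric[of A a m, OF assms(2,3)
      multigraph_sym[OF assms(1)] multigraph_loopless[OF assms(1)]]
  unfolding induced_edges_def by simp

lemma mdegree_le_max_degree:
  assumes "finite V" "v \<in> V"
  shows "mdegree V m v \<le> max_degree V m"
  unfolding max_degree_def using assms by (intro Max_ge) auto

lemma sum_edges_le_mdegree:
  assumes "multigraph V m" "U \<subseteq> V"
  shows "(\<Sum>w\<in>U. m u w) \<le> mdegree V m u"
  unfolding mdegree_def using assms multigraph_finite
  by (intro sum_mono2) auto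

lemma simple_induced_degree_le_1_E:
  assumes "multigraph V m" "finite U" "v \<in> U" "card U \<ge> 2"
    and "simple_induced_degree m U v \<le> 1"
  obtains u where "u \<in> U" "u \<noteq> v" "\<forall>w\<in>U - {u}. m v w = 0"
proof (cases "{w\<in>U. m v w \<noteq> 0} = {}")
  case True
  have "card (U - {v}) \<ge> 1"
    using assms(2-4) by (simp add: card_Diff_singleton)
  then have "U - {v} \<noteq> {}"
    by (metis card.empty not_one_le_zero)
  then obtain u where "u \<in> U" "u \<noteq> v" by blast
  with True show ?thesis using that by blast
next
  case False
  then obtain u where u: "u \<in> U" "m v u \<noteq> 0" by blast
  have "{w\<in>U. m v w \<noteq> 0} = {u}"
    using assms(2,5) u card_le_Suc0_iff_eq[of "{w\<in>U. m v w \<noteq> 0}"]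
    unfolding simple_induced_degree_def by auto
  moreover have "u \<noteq> v"
    using u(2) multigraph_loopless[OF assms(1)] by metis
  ultimately show ?thesis using that u(1) by blast
qed

lemma Gamma_le_iff:
  "Gamma V m \<le> ereal (real_of_int k) \<longleftrightarrow>
     (\<forall>U. U \<subseteq> V \<and> card U \<ge> 3 \<and> odd (card U)
        \<longrightarrow> 2 * int (induced_edges m U) \<le> k * (int (card U) - 1))"
proof -
  have "ereal (2 * real (induced_edges m U) / (real (card U) - 1)) \<le> ereal (real_of_int k)
      \<longleftrightarrow> 2 * int (induced_edges m U) \<le> k * (int (card U) - 1)" if "card U \<ge> 3" for U
  proof -
    have "real (card U) - 1 > 0" using that by simp
    then have "ereal (2 * real (induced_edges m U) / (real (card U) - 1)) \<le> ereal (real_of_int k)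
      \<longleftrightarrow> real_of_int (2 * int (induced_edges m U)) \<le> real_of_int (k * (int (card U) - 1))"
      by (simp add: pos_divide_le_eq)
    then show ?thesis by (simp only: of_int_le_iff)
  qed
  then show ?thesis
    unfolding Gamma_def SUP_le_iff by auto
qed

lemma odd_induced_edges_bound:
  assumes mg: "multigraph V m"
    and max_deg: "int (max_degree V m) \<le> k"
    and cores: "\<forall>U. U \<subseteq> V \<and> odd (card U) \<and> card U \<ge> 3
          \<and> (\<forall>v\<in>U. simple_induced_degree m U v \<ge> 2)
       \<longrightarrow> 2 * int (induced_edges m U) \<le> k * (int (card U) - 1)"
    and "U \<subseteq> V" "odd (card U)"
  shows "2 * int (induced_edges m U) \<le> k * (int (card U) - 1)"
  using assms(4,5)
proof (induction "card U" arbitrary: U rule: less_induct)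
  case less
  have fin_U: "finite U"
    using less.prems multigraph_finite[OF mg] finite_subset by blast
  show ?case
  proof (cases "card U = 1")
    case True
    then obtain a where "U = {a}" by (rule card_1_singletonE)
    then show ?thesis
      using multigraph_loopless[OF mg] by (simp add: induced_edges_def)
  next
    case False
    with less.prems have card_U: "card U \<ge> 3" by presburger
    show ?thesis
    proof (cases "\<forall>v\<in>U. simple_induced_degree m U v \<ge> 2")
      case True
      then show ?thesis using cores less.prems card_U by blast
    next
      case False
      then obtain v where v: "v \<in> U" "simple_induced_degree m U v \<le> 1"
        by (auto simp: not_le)
      have "card U \<ge> 2"
        using card_U by simp
      then obtain u where u: "u \<in> U" "u \<noteq> v" and pendant: "\<forall>w\<in>U - {u}. m v w = 0"
        using simple_induced_degree_le_1_E[OF mg fin_U v(1) _ v(2)] by blast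
      define T where "T = U - {u, v}"
      have U_eq: "U = insert u (insert v T)" and u_notin: "u \<notin> insert v T"
        and v_notin: "v \<notin> T" and fin_T: "finite T"
        using u v fin_U unfolding T_def by auto
      have card_T: "card U = card T + 2"
        using U_eq u_notin v_notin fin_T by simp
      have "T \<subseteq> V" "odd (card T)" "card T < card U"
        using less.prems card_T unfolding T_def by auto
      then have IH: "2 * int (induced_edges m T) \<le> k * (int (card T) - 1)"
        using less.hyps by blast
      have "(\<Sum>w\<in>T. m v w) = 0"
        using pendant unfolding T_def by simp
      then have "induced_edges m U = induced_edges m T + (\<Sum>w\<in>insert v T. m u w)"
        using U_eq induced_edges_insert[OF mg fin_T v_notin]
          induced_edges_insert[OF mg _ u_notin] fin_T by simp
      moreover have "(\<Sum>w\<in>insert v T. m u w) \<le> max_degree V m"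
        using sum_edges_le_mdegree[OF mg, of "insert v T" u]
          mdegree_le_max_degree[OF multigraph_finite[OF mg], of u m] less.prems(1) U_eq
        by (meson insert_subset le_trans)
      ultimately have "2 * int (induced_edges m U) \<le> k * (int (card T) - 1) + 2 * k"
        using IH max_deg by linarith
      then show ?thesis
        using card_T by (simp add: algebra_simps)
    qed
  qed
qed

theorem lemma5:
  fixes V :: "'a set" and m :: "'a \<Rightarrow> 'a \<Rightarrow> nat" and k :: int
  assumes "multigraph V m"
    and "int (max_degree V m) \<le> k"
  shows "Gamma V m \<le> ereal (real_of_int k) \<longleftrightarrow>
    (\<forall>U. U \<subseteq> V \<and> odd (card U) \<and> card U \<ge> 3
          \<and> (\<forall>v\<in>U. simple_induced_degree m U v \<ge> 2)
       \<longrightarrow> 2 * int (induced_edges m U) \<le> k * (int (card U) - 1))"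
  using odd_induced_edges_bound[OF assms] unfolding Gamma_le_iff by blast

end
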